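(* Let $f=\frac1n\sum_{z=1}^nf_z$ where each $\nabla f_z$ is $L$-Lipschitz and $\|\nabla f_z(x)\|\le l$ for all $x$ and $z$. Consider one SCSG epoch (see context) from $\tilde x^{k-1}$ producing $\tilde x^k$, with $b\ge1$, $n\ge 8b$, and $\eta L=\gamma(b/n)^{2/3}$, $\gamma\le\frac13$. Then the increase of function value caused by disturbance satisfies $$\mathbb{E}[f(\tilde x^k)-f(\tilde x^{k-1})]\le\frac{5l^2\gamma^2}{L}\left(\frac bn\right)^{1/3}.$$
   Context: One SCSG epoch from $\tilde x^{k-1}$: $\tilde\mu=\nabla f(\tilde x^{k-1})$, $x_0=\tilde x^{k-1}$, $N\sim\mathrm{Geom}(n/(n+b))$ ($P(N=j)=\frac b{n+b}(\frac n{n+b})^j$, so $\mathbb{E}N=n/b$), for $t=1..N$: $x_t=x_{t-1}-\eta(\nabla f_{I_t}(x_{t-1})-\nabla f_{I_t}(\tilde x^{k-1})+\tilde\mu)$ with $I_t\subset[n]$ uniform of size $b$, $\nabla f_I=\frac1{|I|}\sum_{i\in I}\nabla f_i$; $\tilde x^k=x_N$. *)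

theory Defs
  imports "HOL-Analysis.Analysis" "HOL-Probability.Probability"
begin

definition batches :: "nat \<Rightarrow> nat \<Rightarrow> nat set set" where
  "batches n b = {I. I \<subseteq> {..<n} \<and> card I = b}"

definition bgrad :: "(nat \<Rightarrow> 'a::real_vector \<Rightarrow> 'a) \<Rightarrow> nat set \<Rightarrow> 'a \<Rightarrow> 'a" where
  "bgrad G I x = (1 / real (card I)) *\<^sub>R (\<Sum>i\<in>I. G i x)"

definition fgrad :: "(nat \<Rightarrow> 'a::real_vector \<Rightarrow> 'a) \<Rightarrow> nat \<Rightarrow> 'a \<Rightarrow> 'a" where
  "fgrad G n x = (1 / real n) *\<^sub>R (\<Sum>i<n. G i x)"

text \<open>One inner SCSG step from x, with snapshot x0 and anchor gradient mu;
  the batch I is drawn uniformly from all size-b subsets of [n].\<close>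
definition scsg_step ::
  "(nat \<Rightarrow> 'a::real_vector \<Rightarrow> 'a) \<Rightarrow> nat \<Rightarrow> nat \<Rightarrow> real \<Rightarrow> 'a \<Rightarrow> 'a \<Rightarrow> 'a \<Rightarrow> 'a pmf" where
  "scsg_step G n b \<eta> x0 \<mu> x =
     map_pmf (\<lambda>I. x - \<eta> *\<^sub>R (bgrad G I x - bgrad G I x0 + \<mu>)) (pmf_of_set (batches n b))"

fun scsg_iter ::
  "(nat \<Rightarrow> 'a::real_vector \<Rightarrow> 'a) \<Rightarrow> nat \<Rightarrow> nat \<Rightarrow> real \<Rightarrow> 'a \<Rightarrow> 'a \<Rightarrow> nat \<Rightarrow> 'a \<Rightarrow> 'a pmf" where
  "scsg_iter G n b \<eta> x0 \<mu> 0 x = return_pmf x"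
| "scsg_iter G n b \<eta> x0 \<mu> (Suc j) x = bind_pmf (scsg_iter G n b \<eta> x0 \<mu> j x) (scsg_step G n b \<eta> x0 \<mu>)"

text \<open>One SCSG epoch from x0: N ~ Geom with P(N=j) = b/(n+b) (n/(n+b))^j,
  independent of the batches; output x_N.\<close>
definition scsg_epoch ::
  "(nat \<Rightarrow> 'a::real_vector \<Rightarrow> 'a) \<Rightarrow> nat \<Rightarrow> nat \<Rightarrow> real \<Rightarrow> 'a \<Rightarrow> 'a pmf" where
  "scsg_epoch G n b \<eta> x0 =
     bind_pmf (geometric_pmf (real b / (real n + real b)))
       (\<lambda>N. scsg_iter G n b \<eta> x0 (fgrad G n x0) N x0)"

end

theory Submission
  imports Defs
begin

text \<open>
  The average \<open>f\<close> has the \<open>L\<close>-Lipschitz gradient \<open>\<nabla>f\<close>, so it lies below its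
  quadratic upper model. Each inner direction \<open>v = \<nabla>f\<^sub>I(x) - \<nabla>f\<^sub>I(x\<^sub>0) + \<nabla>f(x\<^sub>0)\<close>
  has norm at most \<open>3 l\<close>, and its mean over the uniformly drawn batch \<open>I\<close> is \<open>\<nabla>f(x)\<close>.
  Hence one inner step raises the expected value of \<open>f\<close> by at most
  \<open>-\<eta> \<parallel>\<nabla>f(x)\<parallel>\<^sup>2 + (9/2) L \<eta>\<^sup>2 l\<^sup>2 \<le> (9/2) L \<eta>\<^sup>2 l\<^sup>2\<close>. Summing over the geometric
  number of steps, whose mean is \<open>n/b\<close>, bounds the expected increase by
  \<open>(9/2) L \<eta>\<^sup>2 l\<^sup>2 n/b = (9/2) l\<^sup>2 \<gamma>\<^sup>2 / L \<cdot> (b/n)\<^bsup>1/3\<^esup>\<close>.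
\<close>

lemma expectation_bind_pmf_nonneg:
  fixes f :: "'b \<Rightarrow> real"
  assumes int: "integrable (measure_pmf (bind_pmf M N)) f"
    and inner: "\<And>x. x \<in> set_pmf M \<Longrightarrow> integrable (measure_pmf (N x)) f"
    and nonneg: "\<And>y. 0 \<le> f y"
  shows "integrable M (\<lambda>x. measure_pmf.expectation (N x) f)"
    and "measure_pmf.expectation (bind_pmf M N) f = (\<integral>x. measure_pmf.expectation (N x) f \<partial>M)"
proof -
  let ?E = "\<lambda>x. measure_pmf.expectation (N x) f"
  have E_nonneg: "0 \<le> ?E x" for x
    using nonneg by simp
  have "AE x in M. ennreal (?E x) = (\<integral>\<^sup>+y. ennreal (f y) \<partial>N x)"
    using inner nonneg by (intro AE_pmfI) (simp add: nn_integral_eq_integral)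
  then have "(\<integral>\<^sup>+x. ennreal (?E x) \<partial>M) = (\<integral>\<^sup>+y. ennreal (f y) \<partial>bind_pmf M N)"
    by (simp add: nn_integral_cong_AE)
  also have "\<dots> = ennreal (measure_pmf.expectation (bind_pmf M N) f)"
    using nonneg by (intro nn_integral_eq_integral[OF int]) simp
  finally have nn_eq: "(\<integral>\<^sup>+x. ennreal (?E x) \<partial>M) = ennreal (measure_pmf.expectation (bind_pmf M N) f)" .
  then show integrable: "integrable M ?E"
    using E_nonneg by (intro integrableI_nonneg) auto
  show "measure_pmf.expectation (bind_pmf M N) f = (\<integral>x. ?E x \<partial>M)"
    using nn_eq nn_integral_eq_integral[OF integrable] E_nonneg nonneg by simp
qed

lemma expectation_bind_pmf:
  fixes f :: "'b \<Rightarrow> real"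
  assumes int: "integrable (measure_pmf (bind_pmf M N)) f"
    and inner: "\<And>x. x \<in> set_pmf M \<Longrightarrow> integrable (measure_pmf (N x)) f"
  shows "integrable M (\<lambda>x. measure_pmf.expectation (N x) f)"
    and "measure_pmf.expectation (bind_pmf M N) f = (\<integral>x. measure_pmf.expectation (N x) f \<partial>M)"
proof -
  define fp where "fp y = max (f y) 0" for y
  define fm where "fm y = max (- f y) 0" for y
  have f_eq: "f = (\<lambda>y. fp y - fm y)"
    by (auto simp: fp_def fm_def fun_eq_iff)
  let ?E = "\<lambda>g x. measure_pmf.expectation (N x) g"
  have int_parts: "integrable (bind_pmf M N) g" "\<And>x. x \<in> set_pmf M \<Longrightarrow> integrable (N x) g"
    if "g \<in> {fp, fm}" for g
    using that int inner unfolding fp_def fm_def by auto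
  have parts: "integrable M (?E g)"
      "measure_pmf.expectation (bind_pmf M N) g = (\<integral>x. ?E g x \<partial>M)"
    if "g \<in> {fp, fm}" for g
    using that int_parts[OF that] by (auto simp: fp_def fm_def intro!: expectation_bind_pmf_nonneg)
  have split: "AE x in M. ?E f x = ?E fp x - ?E fm x"
  proof (rule AE_pmfI)
    fix x assume "x \<in> set_pmf M"
    then have "integrable (N x) fp" "integrable (N x) fm"
      using int_parts by auto
    then show "?E f x = ?E fp x - ?E fm x"
      by (subst f_eq) (rule Bochner_Integration.integral_diff)
  qed
  show "integrable M (?E f)"
    using parts split by (subst integrable_cong_AE) auto
  have "measure_pmf.expectation (bind_pmf M N) f
      = measure_pmf.expectation (bind_pmf M N) fp - measure_pmf.expectation (bind_pmf M N) fm"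
    using int_parts by (subst f_eq) (rule Bochner_Integration.integral_diff; simp)
  also have "\<dots> = (\<integral>x. ?E fp x - ?E fm x \<partial>M)"
    using parts by simp
  also have "\<dots> = (\<integral>x. ?E f x \<partial>M)"
    using split by (intro integral_cong_AE) auto
  finally show "measure_pmf.expectation (bind_pmf M N) f = (\<integral>x. ?E f x \<partial>M)" .
qed

lemma lipschitz_gradient_upper_bound:
  fixes F :: "'a::real_inner \<Rightarrow> real"
  assumes grad: "\<And>x. GDERIV F x :> G x"
    and lip: "\<And>x y. norm (G x - G y) \<le> L * norm (x - y)"
  shows "F y \<le> F x + (y - x) \<bullet> G x + L / 2 * norm (y - x)^2"
proof -
  define d where "d = y - x"
  define \<psi> where "\<psi> t = F (x + t *\<^sub>R d) - t * (d \<bullet> G x) - L / 2 * t^2 * norm d ^ 2" for t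
  have deriv: "DERIV \<psi> t :> d \<bullet> G (x + t *\<^sub>R d) - d \<bullet> G x - L * t * norm d ^ 2" for t
  proof -
    have "((\<lambda>t. x + t *\<^sub>R d) has_derivative (\<lambda>s. s *\<^sub>R d)) (at t)"
      by (auto intro!: derivative_eq_intros)
    from has_derivative_compose[OF this grad[unfolded gderiv_def]]
    have "((\<lambda>t. F (x + t *\<^sub>R d)) has_derivative (\<lambda>s. s * (d \<bullet> G (x + t *\<^sub>R d)))) (at t)"
      by simp
    then have "DERIV (\<lambda>t. F (x + t *\<^sub>R d)) t :> d \<bullet> G (x + t *\<^sub>R d)"
      by (simp add: has_field_derivative_def mult_commute_abs)
    then show ?thesis
      unfolding \<psi>_def by (auto intro!: derivative_eq_intros)
  qed
  have "\<psi> 1 \<le> \<psi> 0"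
  proof (rule DERIV_nonpos_imp_nonincreasing[OF zero_le_one])
    fix t :: real assume t: "0 \<le> t" "t \<le> 1"
    have "d \<bullet> G (x + t *\<^sub>R d) - d \<bullet> G x \<le> norm d * norm (G (x + t *\<^sub>R d) - G x)"
      by (metis inner_diff_right norm_cauchy_schwarz)
    also have "\<dots> \<le> norm d * (L * norm (t *\<^sub>R d))"
      using lip[of "x + t *\<^sub>R d" x] by (intro mult_left_mono) auto
    also have "\<dots> = L * t * norm d ^ 2"
      using t by (simp add: power2_eq_square)
    finally show "\<exists>y. DERIV \<psi> t :> y \<and> y \<le> 0"
      using deriv[of t] by auto
  qed
  then show ?thesis
    unfolding \<psi>_def d_def by (simp add: inner_commute)
qed

lemma GDERIV_average:
  assumes "\<And>i. i \<in> I \<Longrightarrow> GDERIV (F i) x :> G i x"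
  shows "GDERIV (\<lambda>x. (1 / real (card I)) * (\<Sum>i\<in>I. F i x)) x :> bgrad G I x"
  using assms unfolding gderiv_def bgrad_def inner_scaleR_right inner_sum_right
  by (intro has_derivative_mult_right has_derivative_sum)

lemma norm_average_le:
  fixes v :: "'b \<Rightarrow> 'a::real_normed_vector"
  assumes "\<And>i. i \<in> I \<Longrightarrow> norm (v i) \<le> c" and "0 \<le> c"
  shows "norm ((1 / real (card I)) *\<^sub>R (\<Sum>i\<in>I. v i)) \<le> c"
proof (cases "card I = 0")
  case False
  have "norm (\<Sum>i\<in>I. v i) \<le> real (card I) * c"
    using assms(1) sum_norm_le[of I v "\<lambda>_. c"] by simp
  with False show ?thesis
    by (simp add: field_simps)
qed (simp add: assms(2))

lemma fgrad_eq_bgrad: "fgrad G n = bgrad G {..<n}"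
  by (simp add: fun_eq_iff fgrad_def bgrad_def)

lemma norm_bgrad_le:
  assumes "\<And>i. i \<in> I \<Longrightarrow> norm (G i x) \<le> l" and "0 \<le> l"
  shows "norm (bgrad G I x) \<le> l"
  unfolding bgrad_def using assms by (rule norm_average_le)

lemma bgrad_lipschitz:
  assumes "\<And>i. i \<in> I \<Longrightarrow> norm (G i x - G i y) \<le> L * norm (x - y)" and "0 \<le> L"
  shows "norm (bgrad G I x - bgrad G I y) \<le> L * norm (x - y)"
  unfolding bgrad_def scaleR_diff_right[symmetric] sum_subtractf[symmetric]
  using assms by (intro norm_average_le) auto

lemma finite_batches: "finite (batches n b)"
  by (rule finite_subset[of _ "Pow {..<n}"]) (auto simp: batches_def)

lemma batches_nonempty: "b \<le> n \<Longrightarrow> batches n b \<noteq> {}"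
  by (auto simp: batches_def intro!: exI[of _ "{..<b}"])

lemma card_batches: "card (batches n b) = n choose b"
  using n_subsets[of "{..<n}" b] by (simp add: batches_def)

lemma card_batches_containing:
  assumes "i < n" and "1 \<le> b"
  shows "card {I \<in> batches n b. i \<in> I} = (n - 1) choose (b - 1)"
proof -
  define S where "S = {J. J \<subseteq> {..<n} - {i} \<and> card J = b - 1}"
  have "{I \<in> batches n b. i \<in> I} = insert i ` S"
  proof (intro equalityI subsetI)
    fix I assume I: "I \<in> {I \<in> batches n b. i \<in> I}"
    then have "finite I"
      by (auto simp: batches_def intro: finite_subset)
    with I have "I - {i} \<in> S" and "I = insert i (I - {i})"
      by (auto simp: S_def batches_def)
    then show "I \<in> insert i ` S" by blast
  next
    fix I assume "I \<in> insert i ` S"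
    then obtain J where J: "J \<in> S" "I = insert i J" by auto
    then have "finite J" "i \<notin> J"
      by (auto simp: S_def intro: finite_subset)
    with J assms show "I \<in> {I \<in> batches n b. i \<in> I}"
      by (auto simp: S_def batches_def)
  qed
  moreover have "inj_on (insert i) S"
    by (auto simp: S_def inj_on_def)
  moreover have "card S = (n - 1) choose (b - 1)"
    using n_subsets[of "{..<n} - {i}" "b - 1"] assms by (simp add: S_def)
  ultimately show ?thesis
    by (simp add: card_image)
qed

lemma sum_bgrad_batches:
  fixes G :: "nat \<Rightarrow> 'a::real_vector \<Rightarrow> 'a"
  assumes "1 \<le> b" "b \<le> n"
  shows "(\<Sum>I\<in>batches n b. bgrad G I x) = real (card (batches n b)) *\<^sub>R fgrad G n x"
proof -
  let ?B = "batches n b"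
  have "{i \<in> {..<n}. i \<in> I} = I" "card I = b" if "I \<in> ?B" for I
    using that by (auto simp: batches_def)
  then have "(\<Sum>I\<in>?B. bgrad G I x) = (1 / real b) *\<^sub>R (\<Sum>I\<in>?B. \<Sum>i\<in>{i \<in> {..<n}. i \<in> I}. G i x)"
    by (simp add: bgrad_def scaleR_sum_right)
  also have "(\<Sum>I\<in>?B. \<Sum>i\<in>{i \<in> {..<n}. i \<in> I}. G i x) = (\<Sum>i<n. \<Sum>I\<in>{I \<in> ?B. i \<in> I}. G i x)"
    by (rule sum.swap_restrict) (auto simp: finite_batches)
  also have "\<dots> = (\<Sum>i<n. real ((n - 1) choose (b - 1)) *\<^sub>R G i x)"
    using card_batches_containing[where n = n, OF _ assms(1)]
    by (intro sum.cong) (simp_all del: One_nat_def add: sum_constant_scaleR)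
  also have "\<dots> = real ((n - 1) choose (b - 1)) *\<^sub>R (\<Sum>i<n. G i x)"
    by (simp add: scaleR_sum_right)
  finally have "(\<Sum>I\<in>?B. bgrad G I x) = (real ((n - 1) choose (b - 1)) / real b) *\<^sub>R (\<Sum>i<n. G i x)"
    by simp
  moreover have "real ((n - 1) choose (b - 1)) / real b = real (card ?B) / real n"
  proof -
    obtain m k where mk: "n = Suc m" "b = Suc k"
      using assms by (metis Suc_le_D le_trans not0_implies_Suc not_one_le_zero)
    have "real (Suc m) * real (m choose k) = real (Suc m choose Suc k) * real (Suc k)"
      by (metis Suc_times_binomial_eq of_nat_mult)
    then show ?thesis
      unfolding mk card_batches by (simp add: divide_simps del: of_nat_Suc) (simp add: algebra_simps)
  qed
  ultimately show ?thesis
    by (simp add: fgrad_def)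
qed

lemma finite_set_pmf_scsg_step: "b \<le> n \<Longrightarrow> finite (set_pmf (scsg_step G n b \<eta> x0 \<mu> x))"
  using finite_batches batches_nonempty by (simp add: scsg_step_def)

lemma finite_set_pmf_scsg_iter: "b \<le> n \<Longrightarrow> finite (set_pmf (scsg_iter G n b \<eta> x0 \<mu> j x))"
  by (induction j) (auto simp: finite_set_pmf_scsg_step)

lemma norm_scsg_direction_le:
  assumes "I \<in> batches n b" and "\<And>z y. z < n \<Longrightarrow> norm (G z y) \<le> l" and "0 \<le> l"
  shows "norm (bgrad G I x - bgrad G I x0 + fgrad G n x0) \<le> 3 * l"
proof -
  have "norm (bgrad G I y) \<le> l" "norm (fgrad G n y) \<le> l" for y
    using assms unfolding fgrad_eq_bgrad by (auto simp: batches_def intro!: norm_bgrad_le)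
  then show ?thesis
    by (smt (verit) norm_triangle_ineq norm_triangle_ineq4)
qed

lemma expectation_scsg_step_le:
  fixes G :: "nat \<Rightarrow> 'a::real_inner \<Rightarrow> 'a" and f :: "'a \<Rightarrow> real"
  assumes smooth: "\<And>y. f y \<le> f x + (y - x) \<bullet> fgrad G n x + L / 2 * norm (y - x)^2"
    and bnd: "\<And>z y. z < n \<Longrightarrow> norm (G z y) \<le> l"
    and b: "1 \<le> b" "b \<le> n" and L: "0 \<le> L"
  shows "measure_pmf.expectation (scsg_step G n b \<eta> x0 (fgrad G n x0) x) f
    \<le> f x - \<eta> * norm (fgrad G n x)^2 + 9 / 2 * L * \<eta>^2 * l^2"
proof -
  let ?B = "batches n b"
  define g where "g = fgrad G n x"
  define v where "v I = bgrad G I x - bgrad G I x0 + fgrad G n x0" for I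
  define c where "c = 9 / 2 * L * \<eta>^2 * l^2"
  have l: "0 \<le> l"
    using b order_trans[OF norm_ge_zero bnd[of 0 x]] by simp
  have card_pos: "0 < card ?B"
    using finite_batches batches_nonempty[OF b(2)] by (simp add: card_gt_0_iff)
  have each: "f (x - \<eta> *\<^sub>R v I) \<le> f x - \<eta> * (v I \<bullet> g) + c" if "I \<in> ?B" for I
  proof -
    have "norm (v I) \<le> 3 * l"
      unfolding v_def using that bnd l by (rule norm_scsg_direction_le)
    then have "norm (v I)^2 \<le> 9 * l^2"
      using power_mono[of "norm (v I)" "3 * l" 2] by (simp add: power_mult_distrib)
    then have "L / 2 * norm (\<eta> *\<^sub>R v I)^2 \<le> c"
      using mult_left_mono[of "norm (v I)^2" "9 * l^2" "L / 2 * \<eta>^2"] L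
      by (simp add: c_def power_mult_distrib mult.assoc)
    then show ?thesis
      using smooth[of "x - \<eta> *\<^sub>R v I"] by (simp add: g_def)
  qed
  have sum_v: "(\<Sum>I\<in>?B. v I) = real (card ?B) *\<^sub>R g"
    using sum_bgrad_batches[OF b, of G x] sum_bgrad_batches[OF b, of G x0]
    by (simp add: v_def g_def sum.distrib sum_subtractf sum_constant_scaleR)
  have "measure_pmf.expectation (scsg_step G n b \<eta> x0 (fgrad G n x0) x) f
      = (\<Sum>I\<in>?B. f (x - \<eta> *\<^sub>R v I)) / real (card ?B)"
    using finite_batches batches_nonempty[OF b(2)]
    by (simp add: scsg_step_def v_def integral_pmf_of_set)
  also have "\<dots> \<le> (\<Sum>I\<in>?B. f x - \<eta> * (v I \<bullet> g) + c) / real (card ?B)"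
    using each card_pos by (intro divide_right_mono sum_mono) auto
  also have "(\<Sum>I\<in>?B. f x - \<eta> * (v I \<bullet> g) + c) = real (card ?B) * (f x + c) - \<eta> * ((\<Sum>I\<in>?B. v I) \<bullet> g)"
    by (simp add: sum.distrib sum_subtractf inner_sum_left sum_distrib_left algebra_simps)
  also have "\<dots> = real (card ?B) * (f x - \<eta> * (g \<bullet> g) + c)"
    by (simp add: sum_v algebra_simps)
  finally show ?thesis
    using card_pos by (simp add: c_def g_def power2_norm_eq_inner)
qed

lemma expectation_scsg_iter_le:
  assumes "b \<le> n"
    and step: "\<And>y. measure_pmf.expectation (scsg_step G n b \<eta> x0 \<mu> y) f \<le> f y + c"
  shows "measure_pmf.expectation (scsg_iter G n b \<eta> x0 \<mu> j x) f \<le> f x + real j * c"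
proof (induction j)
  case (Suc j)
  let ?M = "scsg_iter G n b \<eta> x0 \<mu> j x"
  have int: "integrable (measure_pmf (scsg_iter G n b \<eta> x0 \<mu> k x)) g"
    "integrable (measure_pmf (scsg_step G n b \<eta> x0 \<mu> y)) g" for k y and g :: "_ \<Rightarrow> real"
    using assms(1) by (simp_all add: integrable_measure_pmf_finite finite_set_pmf_scsg_iter
        finite_set_pmf_scsg_step)
  have "measure_pmf.expectation (scsg_iter G n b \<eta> x0 \<mu> (Suc j) x) f
      = (\<integral>y. measure_pmf.expectation (scsg_step G n b \<eta> x0 \<mu> y) f \<partial>?M)"
    using expectation_bind_pmf(2)[OF int(1)[of "Suc j", simplified] int(2)] by simp
  also have "\<dots> \<le> (\<integral>y. f y + c \<partial>?M)"
    using int step by (intro integral_mono) auto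
  also have "\<dots> = measure_pmf.expectation ?M f + c"
    using int by simp
  finally show ?case
    using Suc.IH by (simp add: algebra_simps)
qed simp

lemma expectation_bind_geometric_pmf_le:
  fixes h :: "'a \<Rightarrow> real"
  assumes p: "p \<in> {0<..1}" and int: "\<And>N. integrable (measure_pmf (P N)) h"
    and le: "\<And>N. measure_pmf.expectation (P N) h \<le> real N * c" and c: "0 \<le> c"
  shows "measure_pmf.expectation (bind_pmf (geometric_pmf p) P) h \<le> (1 - p) / p * c"
proof (cases "integrable (measure_pmf (bind_pmf (geometric_pmf p) P)) h")
  case True
  have "measure_pmf.expectation (bind_pmf (geometric_pmf p) P) h
      = (\<integral>N. measure_pmf.expectation (P N) h \<partial>geometric_pmf p)"
    using expectation_bind_pmf(2)[OF True int] .
  also have "\<dots> \<le> (\<integral>N. real N * c \<partial>geometric_pmf p)"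
    using expectation_bind_pmf(1)[OF True int] integrable_real_geometric_pmf[OF p] le
    by (intro integral_mono) auto
  also have "\<dots> = (1 - p) / p * c"
    using expectation_geometric_pmf[OF p] by simp
  finally show ?thesis .
next
  case False
  with p c show ?thesis
    by (simp add: not_integrable_integral_eq)
qed

lemma expectation_scsg_epoch_le:
  fixes f :: "'a::real_vector \<Rightarrow> real"
  assumes b: "1 \<le> b" "b \<le> n" and c: "0 \<le> c"
    and step: "\<And>y. measure_pmf.expectation (scsg_step G n b \<eta> x0 (fgrad G n x0) y) f \<le> f y + c"
  shows "measure_pmf.expectation (scsg_epoch G n b \<eta> x0) (\<lambda>x. f x - f x0) \<le> real n / real b * c"
proof -
  define p where "p = real b / (real n + real b)"
  have pos: "0 < real b" "0 < real n + real b"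
    using b by auto
  then have p: "p \<in> {0<..1}"
    by (simp add: p_def)
  have "1 - p = real n / (real n + real b)"
    using pos by (simp add: p_def field_simps)
  with pos have ratio: "(1 - p) / p = real n / real b"
    by (simp add: p_def)
  have int: "integrable (measure_pmf (scsg_iter G n b \<eta> x0 (fgrad G n x0) N x0)) g"
    for N and g :: "'a \<Rightarrow> real"
    using finite_set_pmf_scsg_iter[OF b(2)] by (rule integrable_measure_pmf_finite)
  have "measure_pmf.expectation (scsg_iter G n b \<eta> x0 (fgrad G n x0) N x0)
      (\<lambda>x. f x - f x0) \<le> real N * c" for N
    using expectation_scsg_iter_le[OF b(2) step, of N x0]
    by (simp add: Bochner_Integration.integral_diff[OF int int])
  then have "measure_pmf.expectation (scsg_epoch G n b \<eta> x0) (\<lambda>x. f x - f x0) \<le> (1 - p) / p * c"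
    unfolding scsg_epoch_def p_def[symmetric]
    by (rule expectation_bind_geometric_pmf_le[OF p int _ c])
  with ratio show ?thesis
    by simp
qed

lemma step_size_square_ratio:
  fixes r L \<eta> \<gamma> :: real
  assumes r: "0 < r" and L: "0 < L" and step: "\<eta> * L = \<gamma> * r powr (2/3)"
  shows "L * \<eta>^2 / r = \<gamma>^2 / L * r powr (1/3)"
proof -
  have "(r powr (2/3))^2 = r powr (1 + 1/3)"
    by (simp add: power2_eq_square powr_add[symmetric])
  also have "\<dots> = r * r powr (1/3)"
    using r by (simp only: powr_add powr_one)
  finally have "(\<eta> * L)^2 = \<gamma>^2 * (r * r powr (1/3))"
    unfolding step by (simp add: power_mult_distrib)
  then show ?thesis
    using r L by (simp add: field_simps power_mult_distrib power2_eq_square)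
qed

theorem lemma14:
  fixes F :: "nat \<Rightarrow> 'a::euclidean_space \<Rightarrow> real"
    and G :: "nat \<Rightarrow> 'a \<Rightarrow> 'a"
    and n b :: nat and L l \<eta> \<gamma> :: real and x0 :: 'a
  assumes grad: "\<And>z x. z < n \<Longrightarrow> GDERIV (F z) x :> G z x"
    and lip: "\<And>z x y. z < n \<Longrightarrow> norm (G z x - G z y) \<le> L * norm (x - y)"
    and bnd: "\<And>z x. z < n \<Longrightarrow> norm (G z x) \<le> l"
    and L_pos: "L > 0"
    and b_ge: "b \<ge> 1" and n_ge: "n \<ge> 8 * b"
    and step: "\<eta> * L = \<gamma> * (real b / real n) powr (2/3)"
    and gamma_pos: "\<gamma> > 0" and gamma_le: "\<gamma> \<le> 1/3"
  shows "measure_pmf.expectation (scsg_epoch G n b \<eta> x0)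
           (\<lambda>x. (1 / real n) * (\<Sum>z<n. F z x) - (1 / real n) * (\<Sum>z<n. F z x0))
         \<le> 5 * l^2 * \<gamma>^2 / L * (real b / real n) powr (1/3)"
proof -
  have b: "1 \<le> b" "b \<le> n" and r: "0 < real b / real n"
    using b_ge n_ge by auto
  define f where "f = (\<lambda>x. (1 / real n) * (\<Sum>z<n. F z x))"
  define c where "c = 9 / 2 * L * \<eta>^2 * l^2"
  have "0 < \<eta> * L"
    unfolding step using gamma_pos b by simp
  with L_pos have \<eta>_pos: "0 < \<eta>"
    by (simp add: zero_less_mult_iff)
  have "GDERIV f x :> fgrad G n x" for x
    using GDERIV_average[of "{..<n}" F x G] grad by (simp add: f_def fgrad_eq_bgrad)
  moreover have "norm (fgrad G n x - fgrad G n y) \<le> L * norm (x - y)" for x y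
    unfolding fgrad_eq_bgrad using lip L_pos by (intro bgrad_lipschitz) auto
  ultimately have smooth: "f y \<le> f x + (y - x) \<bullet> fgrad G n x + L / 2 * norm (y - x)^2" for x y
    by (rule lipschitz_gradient_upper_bound)
  have "measure_pmf.expectation (scsg_step G n b \<eta> x0 (fgrad G n x0) x) f \<le> f x + c" for x
  proof -
    have "measure_pmf.expectation (scsg_step G n b \<eta> x0 (fgrad G n x0) x) f
        \<le> f x - \<eta> * norm (fgrad G n x)^2 + c"
      using expectation_scsg_step_le[where x = x, OF smooth bnd b] L_pos by (simp add: c_def)
    also have "\<dots> \<le> f x + c"
      using \<eta>_pos by simp
    finally show ?thesis .
  qed
  then have "measure_pmf.expectation (scsg_epoch G n b \<eta> x0) (\<lambda>x. f x - f x0) \<le> real n / real b * c"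
    using L_pos by (intro expectation_scsg_epoch_le[OF b]) (simp_all add: c_def)
  also have "\<dots> = 9 / 2 * l^2 * (L * \<eta>^2 / (real b / real n))"
    using b by (simp add: c_def field_simps)
  also have "\<dots> = 9 / 2 * (l^2 * \<gamma>^2 / L * (real b / real n) powr (1/3))"
    using step_size_square_ratio[OF r L_pos step] by simp
  also have "\<dots> \<le> 5 * (l^2 * \<gamma>^2 / L * (real b / real n) powr (1/3))"
    using L_pos by (intro mult_right_mono) auto
  finally show ?thesis
    unfolding f_def by (simp add: mult.assoc)
qed

end
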